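(* Let $p \ge 1$ and let $G_p$ be the graph obtained from the cycle $C_6$ by substituting a complete graph $K_p$ for each vertex. Then $G_p$ is $(4K_1, C_4, \text{claw})$-free, $G_p$ is $2p$-colourable, and $G_p$ has a frozen $3p$-colouring.
   Context: All graphs are finite and simple. Substituting a graph $H$ for a vertex $v$ of $G$ means taking $G-v$, adding a disjoint copy of $H$, and joining every vertex of $H$ to every neighbour of $v$ in $G$ (done for each vertex of $C_6$ in turn). A $k$-colouring is a proper colouring with colours $\{1,\dots,k\}$. A $k$-colouring is frozen if, for every vertex $v$, all $k$ colours appear in the closed neighbourhood of $v$ (equivalently, it is an isolated vertex of the reconfiguration graph of $k$-colourings, where two colourings are adjacent if they differ on exactly one vertex). $\mathcal{H}$-free means no induced subgraph isomorphic to a member of $\mathcal{H}$; $4K_1$ is the edgeless graph on 4 vertices, claw is $K_{1,3}$. *)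

theory Defs
  imports Main
begin

text \<open>A graph is a vertex set together with an adjacency relation.
  All graphs used below are finite and simple (symmetric, irreflexive adjacency
  supported on the vertex set).\<close>

type_synonym 'a graph = "'a set \<times> ('a \<Rightarrow> 'a \<Rightarrow> bool)"

definition verts :: "'a graph \<Rightarrow> 'a set" where "verts G = fst G"
definition adj :: "'a graph \<Rightarrow> 'a \<Rightarrow> 'a \<Rightarrow> bool" where "adj G = snd G"

definition simple_graph :: "'a graph \<Rightarrow> bool" where
  "simple_graph G \<longleftrightarrow> finite (verts G) \<and>
     (\<forall>u v. adj G u v \<longrightarrow> u \<in> verts G \<and> v \<in> verts G \<and> u \<noteq> v \<and> adj G v u)"

text \<open>Cycle C_n on vertices 0..n-1 (meant for n >= 3).\<close>
definition cycle_graph :: "nat \<Rightarrow> nat graph" where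
  "cycle_graph n = ({0..<n}, \<lambda>i j. i < n \<and> j < n \<and> (j = (i + 1) mod n \<or> i = (j + 1) mod n))"

definition complete_graph :: "nat \<Rightarrow> nat graph" where
  "complete_graph p = ({0..<p}, \<lambda>a b. a < p \<and> b < p \<and> a \<noteq> b)"

definition edgeless_graph :: "nat \<Rightarrow> nat graph" where
  "edgeless_graph n = ({0..<n}, \<lambda>a b. False)"

definition claw :: "nat graph" where
  "claw = ({0..<4}, \<lambda>i j. i < 4 \<and> j < 4 \<and> i \<noteq> j \<and> (i = 0 \<or> j = 0))"

text \<open>Substituting the graph H v for every vertex v of G (the result of doing the
  substitution for each vertex in turn): the copy of H v replaces v, and every vertex of
  the copy of H v is joined to every vertex of the copy of H w whenever v w is an edge of G.\<close>
definition subst_all :: "'a graph \<Rightarrow> ('a \<Rightarrow> 'b graph) \<Rightarrow> ('a \<times> 'b) graph" where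
  "subst_all G H =
     ({(v, x). v \<in> verts G \<and> x \<in> verts (H v)},
      \<lambda>(v, x) (w, y). v \<in> verts G \<and> x \<in> verts (H v) \<and> w \<in> verts G \<and> y \<in> verts (H w) \<and>
         ((v = w \<and> adj (H v) x y) \<or> adj G v w))"

definition G_p :: "nat \<Rightarrow> (nat \<times> nat) graph" where
  "G_p p = subst_all (cycle_graph 6) (\<lambda>_. complete_graph p)"

definition induced_subgraph_iso :: "'b graph \<Rightarrow> 'a graph \<Rightarrow> bool" where
  "induced_subgraph_iso H G \<longleftrightarrow>
     (\<exists>f. inj_on f (verts H) \<and> f ` verts H \<subseteq> verts G \<and>
          (\<forall>u\<in>verts H. \<forall>v\<in>verts H. adj H u v \<longleftrightarrow> adj G (f u) (f v)))"

definition free_of :: "'b graph set \<Rightarrow> 'a graph \<Rightarrow> bool" where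
  "free_of Hs G \<longleftrightarrow> (\<forall>H\<in>Hs. \<not> induced_subgraph_iso H G)"

definition colouring :: "'a graph \<Rightarrow> nat \<Rightarrow> ('a \<Rightarrow> nat) \<Rightarrow> bool" where
  "colouring G k c \<longleftrightarrow> (\<forall>v\<in>verts G. c v \<in> {1..k}) \<and>
     (\<forall>u v. adj G u v \<longrightarrow> c u \<noteq> c v)"

definition colourable :: "'a graph \<Rightarrow> nat \<Rightarrow> bool" where
  "colourable G k \<longleftrightarrow> (\<exists>c. colouring G k c)"

definition frozen_colouring :: "'a graph \<Rightarrow> nat \<Rightarrow> ('a \<Rightarrow> nat) \<Rightarrow> bool" where
  "frozen_colouring G k c \<longleftrightarrow> colouring G k c \<and>
     (\<forall>v\<in>verts G. {1..k} \<subseteq> c ` ({v} \<union> {u. adj G v u}))"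

end

theory Submission
  imports Defs
begin

(* G_p is the clique blow-up of C_6: vertex v becomes the clique {v} x {0..<p}.

   Two vertices of an induced subgraph H that fall into the same block are adjacent and have the
   same neighbours in H, i.e. they are true twins of H. None of 4K_1, C_4 and the claw has true
   twins, so an induced copy of one of them in G_p projects injectively to an induced copy in C_6.
   But C_6 has independence number 3 and maximum degree 2, and distinct vertices of C_6 have
   distinct neighbourhoods, which rules out 4K_1, the claw and C_4 respectively.

   A k-colouring c of G lifts to a kp-colouring of its clique blow-up by giving block v the
   c(v)-th interval of p colours; if c is frozen, so is the lift, because the closed
   neighbourhood of (v, x) contains the whole blocks of the closed neighbourhood of v. The
   2-colouring i mod 2 and the frozen 3-colouring i mod 3 of C_6 give the claims. *)

lemma Suc_mod_neq_mod:
  fixes i k :: nat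
  assumes "2 \<le> k"
  shows "(i + 1) mod k \<noteq> i mod k"
proof (cases "i mod k + 1 < k")
  case True
  then show ?thesis by (simp add: mod_Suc)
next
  case False
  then have "i mod k + 1 = k" using mod_less_divisor[of k i] assms by linarith
  then show ?thesis using assms by (simp add: mod_Suc)
qed

lemma div_2_eq_less_imp_Suc: "(a::nat) div 2 = b div 2 \<Longrightarrow> a < b \<Longrightarrow> b = a + 1"
  by presburger

lemma mod_3_image_consecutive: "(\<lambda>j::nat. j mod 3 + 1) ` {i, i + 1, i + 2} = {1..3}"
proof -
  have "i mod 3 < 3" by simp
  then have "i mod 3 = 0 \<or> i mod 3 = 1 \<or> i mod 3 = 2" by linarith
  then show ?thesis by (auto simp: mod_Suc)
qed

lemma mult_add_eq_mult_add_iff: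
  fixes a b x y p :: nat
  assumes "x < p" "y < p"
  shows "a * p + x = b * p + y \<longleftrightarrow> a = b \<and> x = y"
proof
  assume eq: "a * p + x = b * p + y"
  have "a = (a * p + x) div p" "b = (b * p + y) div p" using assms by simp_all
  moreover have "x = (a * p + x) mod p" "y = (b * p + y) mod p" using assms by simp_all
  ultimately show "a = b \<and> x = y" using eq by metis
qed simp

lemma mult_add_less_mult:
  fixes a k x p :: nat
  assumes "a < k" "x < p"
  shows "a * p + x < k * p"
proof -
  have "a * p + x < Suc a * p" using assms(2) by simp
  also have "\<dots> \<le> k * p" using assms(1) by (intro mult_le_mono1) simp
  finally show ?thesis .
qed

abbreviation clique_blowup :: "'a graph \<Rightarrow> nat \<Rightarrow> ('a \<times> nat) graph" where
  "clique_blowup G p \<equiv> subst_all G (\<lambda>_. complete_graph p)"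

lemma verts_clique_blowup:
  "verts (clique_blowup G p) = verts G \<times> {0..<p}"
  by (auto simp: subst_all_def verts_def complete_graph_def)

lemma adj_clique_blowup:
  "adj (clique_blowup G p) (v, x) (w, y) \<longleftrightarrow>
     v \<in> verts G \<and> w \<in> verts G \<and> x < p \<and> y < p \<and> ((v = w \<and> x \<noteq> y) \<or> adj G v w)"
  by (auto simp: subst_all_def verts_def adj_def complete_graph_def)

definition true_twins :: "'a graph \<Rightarrow> 'a \<Rightarrow> 'a \<Rightarrow> bool" where
  "true_twins H u v \<longleftrightarrow>
     u \<noteq> v \<and> adj H u v \<and> (\<forall>w \<in> verts H - {u, v}. adj H u w \<longleftrightarrow> adj H v w)"

lemma induced_subgraph_iso_of_clique_blowup:
  assumes no_twins: "\<And>u v. u \<in> verts H \<Longrightarrow> v \<in> verts H \<Longrightarrow> \<not> true_twins H u v"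
    and "induced_subgraph_iso H (clique_blowup G p)"
  shows "induced_subgraph_iso H G"
proof -
  obtain f where inj: "inj_on f (verts H)" and into: "f ` verts H \<subseteq> verts (clique_blowup G p)"
    and iso: "\<forall>u \<in> verts H. \<forall>v \<in> verts H.
      adj H u v \<longleftrightarrow> adj (clique_blowup G p) (f u) (f v)"
    using assms(2) unfolding induced_subgraph_iso_def by blast
  define g where "g = fst \<circ> f"
  have g_into: "g ` verts H \<subseteq> verts G"
    using into by (auto simp: g_def verts_clique_blowup)
  have adj_image: "adj (clique_blowup G p) (f u) (f v) \<longleftrightarrow>
      (g u = g v \<and> snd (f u) \<noteq> snd (f v)) \<or> adj G (g u) (g v)"
    if "u \<in> verts H" "v \<in> verts H" for u v
  proof -
    have "fst (f u) \<in> verts G \<and> snd (f u) < p" "fst (f v) \<in> verts G \<and> snd (f v) < p"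
      using into that by (auto simp: verts_clique_blowup)
    then show ?thesis
      using adj_clique_blowup[of G p "fst (f u)" "snd (f u)" "fst (f v)" "snd (f v)"]
      by (simp add: g_def)
  qed
  have adj_distinct: "adj H u v \<longleftrightarrow> g u = g v \<or> adj G (g u) (g v)"
    if "u \<in> verts H" "v \<in> verts H" "u \<noteq> v" for u v
  proof -
    have "f u \<noteq> f v" using inj that by (meson inj_on_contraD)
    then have "g u = g v \<Longrightarrow> snd (f u) \<noteq> snd (f v)"
      by (simp add: g_def prod_eq_iff)
    then show ?thesis using iso adj_image that by blast
  qed
  have "inj_on g (verts H)"
  proof (rule inj_onI, rule ccontr)
    fix u v assume uv: "u \<in> verts H" "v \<in> verts H" "g u = g v" "u \<noteq> v"
    then have "true_twins H u v"
      unfolding true_twins_def using adj_distinct by auto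
    with no_twins uv show False by blast
  qed
  moreover have "adj H u v \<longleftrightarrow> adj G (g u) (g v)" if "u \<in> verts H" "v \<in> verts H" for u v
  proof (cases "u = v")
    case True
    then show ?thesis using iso adj_image that by blast
  next
    case False
    then show ?thesis using adj_distinct \<open>inj_on g (verts H)\<close> that by (auto dest: inj_onD)
  qed
  ultimately show ?thesis using g_into unfolding induced_subgraph_iso_def by blast
qed

definition blowup_colouring :: "('a \<Rightarrow> nat) \<Rightarrow> nat \<Rightarrow> 'a \<times> nat \<Rightarrow> nat" where
  "blowup_colouring c p = (\<lambda>(v, x). (c v - 1) * p + x + 1)"

lemma colouring_clique_blowup:
  assumes "colouring G k c"
  shows "colouring (clique_blowup G p) (k * p) (blowup_colouring c p)"
  unfolding colouring_def
proof (intro conjI ballI allI impI)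
  fix u assume "u \<in> verts (clique_blowup G p)"
  then obtain v x where u: "u = (v, x)" "v \<in> verts G" "x < p"
    by (auto simp: verts_clique_blowup)
  then have "c v \<in> {1..k}" using assms by (simp add: colouring_def)
  then have "(c v - 1) * p + x < k * p" using u(3) by (intro mult_add_less_mult) auto
  then show "blowup_colouring c p u \<in> {1..k * p}" by (simp add: u(1) blowup_colouring_def)
next
  fix u w assume adj: "adj (clique_blowup G p) u w"
  obtain v x v' y where uw: "u = (v, x)" "w = (v', y)" by (cases u, cases w)
  have "v \<in> verts G" "v' \<in> verts G" "x < p" "y < p" "(v = v' \<and> x \<noteq> y) \<or> adj G v v'"
    using adj by (auto simp: uw adj_clique_blowup)
  moreover have "c v \<in> {1..k}" "c v' \<in> {1..k}" "adj G v v' \<Longrightarrow> c v \<noteq> c v'"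
    using assms calculation by (auto simp: colouring_def)
  ultimately show "blowup_colouring c p u \<noteq> blowup_colouring c p w"
    by (auto simp: uw blowup_colouring_def mult_add_eq_mult_add_iff)
qed

lemma frozen_colouring_clique_blowup:
  assumes "simple_graph G" "frozen_colouring G k c"
  shows "frozen_colouring (clique_blowup G p) (k * p) (blowup_colouring c p)"
proof -
  have covers: "m \<in> blowup_colouring c p ` ({u} \<union> {w. adj (clique_blowup G p) u w})"
    if "u \<in> verts (clique_blowup G p)" and m_range: "m \<in> {1..k * p}" for u m
  proof -
    obtain v x where u: "u = (v, x)" "v \<in> verts G" "x < p"
      using \<open>u \<in> verts (clique_blowup G p)\<close> by (auto simp: verts_clique_blowup)
    define j y where "j = (m - 1) div p" and "y = (m - 1) mod p"
    have "y < p" "j < k" using u(3) m_range by (auto simp: j_def y_def div_less_iff_less_mult)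
    have m: "m = j * p + y + 1" using m_range by (simp add: j_def y_def)
    have "j + 1 \<in> {1..k}" using \<open>j < k\<close> by simp
    then have "j + 1 \<in> c ` ({v} \<union> {w. adj G v w})"
      using assms(2) u(2) unfolding frozen_colouring_def by blast
    then obtain w where "j + 1 = c w" and w: "w \<in> {v} \<union> {w. adj G v w}" by (rule imageE)
    then have "w \<in> verts G" using assms(1) u(2) by (auto simp: simple_graph_def)
    then have "(w, y) = u \<or> adj (clique_blowup G p) u (w, y)"
      using w u \<open>y < p\<close> by (auto simp: adj_clique_blowup)
    moreover have "blowup_colouring c p (w, y) = m"
      by (simp add: blowup_colouring_def \<open>j + 1 = c w\<close>[symmetric] m)
    ultimately show ?thesis by blast
  qed
  show ?thesis
    unfolding frozen_colouring_def
  proof (intro conjI ballI subsetI)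
    show "colouring (clique_blowup G p) (k * p) (blowup_colouring c p)"
      using assms(2) by (intro colouring_clique_blowup) (simp add: frozen_colouring_def)
  qed (rule covers)
qed

lemma verts_edgeless_graph: "verts (edgeless_graph n) = {0..<n}"
  by (simp add: edgeless_graph_def verts_def)

lemma not_adj_edgeless_graph: "\<not> adj (edgeless_graph n) u v"
  by (simp add: edgeless_graph_def adj_def)

lemma verts_claw: "verts claw = {0..<4}"
  by (simp add: claw_def verts_def)

lemma adj_claw: "adj claw i j \<longleftrightarrow> i < 4 \<and> j < 4 \<and> i \<noteq> j \<and> (i = 0 \<or> j = 0)"
  by (simp add: claw_def adj_def)

lemma verts_cycle_graph: "verts (cycle_graph n) = {0..<n}"
  by (simp add: cycle_graph_def verts_def)

lemma adj_cycle_graph: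
  "adj (cycle_graph n) i j \<longleftrightarrow> i < n \<and> j < n \<and> (j = (i + 1) mod n \<or> i = (j + 1) mod n)"
  by (simp add: cycle_graph_def adj_def)

lemma no_true_twins_edgeless_graph: "\<not> true_twins (edgeless_graph n) u v"
  by (simp add: true_twins_def not_adj_edgeless_graph)

lemma no_true_twins_claw: "\<not> true_twins claw u v"
proof
  assume "true_twins claw u v"
  then have "adj claw u v"
    and twin: "\<And>w. w < 4 \<Longrightarrow> w \<noteq> u \<Longrightarrow> w \<noteq> v \<Longrightarrow> adj claw u w \<longleftrightarrow> adj claw v w"
    unfolding true_twins_def verts_claw by auto
  moreover have "u \<in> {0, 1, 2, 3}" "v \<in> {0, 1, 2, 3}"
    using \<open>adj claw u v\<close> by (auto simp: adj_claw)
  ultimately show False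
    using twin[of 1] twin[of 2] twin[of 3]
    by (elim insertE emptyE) (simp_all add: adj_claw)
qed

lemma no_true_twins_cycle_graph_4: "\<not> true_twins (cycle_graph 4) u v"
proof
  assume "true_twins (cycle_graph 4) u v"
  then have "adj (cycle_graph 4) u v"
    and twin: "\<And>w. w < 4 \<Longrightarrow> w \<noteq> u \<Longrightarrow> w \<noteq> v \<Longrightarrow>
      adj (cycle_graph 4) u w \<longleftrightarrow> adj (cycle_graph 4) v w"
    unfolding true_twins_def verts_cycle_graph by auto
  moreover have "u \<in> {0, 1, 2, 3}" "v \<in> {0, 1, 2, 3}"
    using \<open>adj (cycle_graph 4) u v\<close> by (auto simp: adj_cycle_graph)
  ultimately show False
    using twin[of 0] twin[of 1] twin[of 2] twin[of 3]
    by (elim insertE emptyE) (simp_all add: adj_cycle_graph)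
qed

lemma simple_graph_cycle_graph:
  assumes "2 \<le> n"
  shows "simple_graph (cycle_graph n)"
proof -
  have "(i + 1) mod n \<noteq> i" if "i < n" for i
    using Suc_mod_neq_mod[OF assms, of i] that by simp
  then show ?thesis
    unfolding simple_graph_def verts_cycle_graph adj_cycle_graph
    by (metis atLeastLessThan_iff finite_atLeastLessThan zero_le)
qed

lemma adj_cycle_graph_Suc: "i + 1 < n \<Longrightarrow> adj (cycle_graph n) i (i + 1)"
  by (simp add: adj_cycle_graph)

lemma neighbours_cycle_graph:
  assumes "i < n"
  shows "{j. adj (cycle_graph n) i j} = {(i + 1) mod n, (i + n - 1) mod n}"
proof -
  have pred: "(i + n - 1) mod n = (if i = 0 then n - 1 else i - 1)"
  proof (cases "i = 0")
    case False
    then obtain k where "i = Suc k" using not0_implies_Suc by blast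
    then show ?thesis using assms by simp
  qed (use assms in simp)
  have pred_iff: "j < n \<and> i = (j + 1) mod n \<longleftrightarrow> j = (i + n - 1) mod n" for j
    unfolding pred using assms by (auto simp: mod_Suc)
  have "adj (cycle_graph n) i j \<longleftrightarrow> j = (i + 1) mod n \<or> j = (i + n - 1) mod n" for j
    using assms pred_iff[of j] by (auto simp: adj_cycle_graph)
  then show ?thesis by blast
qed

lemma card_neighbours_cycle_graph: "i < n \<Longrightarrow> card {j. adj (cycle_graph n) i j} \<le> 2"
  by (simp add: neighbours_cycle_graph card_insert_if)

lemma cycle_graph_claw_free: "\<not> induced_subgraph_iso claw (cycle_graph n)"
proof
  assume "induced_subgraph_iso claw (cycle_graph n)"
  then obtain f where inj: "inj_on f {0..<4}" and into: "f ` {0..<4} \<subseteq> {0..<n}"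
    and iso: "\<forall>u \<in> {0..<4}. \<forall>v \<in> {0..<4}.
      adj claw u v \<longleftrightarrow> adj (cycle_graph n) (f u) (f v)"
    unfolding induced_subgraph_iso_def verts_claw verts_cycle_graph by blast
  have "f 0 < n" using into by (simp add: image_subset_iff)
  have "inj_on f {1, 2, 3}" by (rule inj_on_subset[OF inj]) auto
  then have "3 = card (f ` {1, 2, 3})" by (simp add: card_image)
  also have "\<dots> \<le> card {j. adj (cycle_graph n) (f 0) j}"
  proof (rule card_mono)
    show "finite {j. adj (cycle_graph n) (f 0) j}"
      using neighbours_cycle_graph[OF \<open>f 0 < n\<close>] by simp
    show "f ` {1, 2, 3} \<subseteq> {j. adj (cycle_graph n) (f 0) j}"
      using iso[rule_format, of 0 1] iso[rule_format, of 0 2] iso[rule_format, of 0 3]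
      by (simp add: adj_claw)
  qed
  also have "\<dots> \<le> 2"
    using \<open>f 0 < n\<close> by (rule card_neighbours_cycle_graph)
  finally show False by simp
qed

lemma even_cycle_graph_edgeless_free:
  assumes "even n"
  shows "\<not> induced_subgraph_iso (edgeless_graph (n div 2 + 1)) (cycle_graph n)"
proof
  let ?A = "{0..<n div 2 + 1}"
  assume "induced_subgraph_iso (edgeless_graph (n div 2 + 1)) (cycle_graph n)"
  then obtain f where inj: "inj_on f ?A" and into: "f ` ?A \<subseteq> {0..<n}"
    and indep: "\<forall>u \<in> ?A. \<forall>v \<in> ?A. \<not> adj (cycle_graph n) (f u) (f v)"
    unfolding induced_subgraph_iso_def verts_edgeless_graph verts_cycle_graph
    by (auto simp: not_adj_edgeless_graph)
  have "\<not> inj_on (\<lambda>u. f u div 2) ?A"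
  proof
    assume "inj_on (\<lambda>u. f u div 2) ?A"
    moreover have "(\<lambda>u. f u div 2) ` ?A \<subseteq> {0..<n div 2}"
      using into assms by (auto elim!: evenE)
    ultimately have "card ?A \<le> card {0..<n div 2}"
      by (intro card_inj_on_le) auto
    then show False by simp
  qed
  then obtain u v where uv: "u \<in> ?A" "v \<in> ?A" "f u div 2 = f v div 2" "u \<noteq> v"
    unfolding inj_on_def by blast
  then have "f u \<noteq> f v" using inj by (meson inj_on_contraD)
  moreover have "f u < n" "f v < n" using into uv(1,2) by (auto simp: image_subset_iff)
  ultimately have "adj (cycle_graph n) (f u) (f v) \<or> adj (cycle_graph n) (f v) (f u)"
    using uv(3) adj_cycle_graph_Suc
      div_2_eq_less_imp_Suc[of "f u" "f v"] div_2_eq_less_imp_Suc[of "f v" "f u"]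
    by (cases "f u < f v") auto
  with indep uv show False by blast
qed

lemma cycle_graph_6_neighbours_inj:
  assumes "i < 6" "j < 6" and "{k. adj (cycle_graph 6) i k} = {k. adj (cycle_graph 6) j k}"
  shows "i = j"
proof -
  have "(i + 1) mod 6 \<in> {(j + 1) mod 6, (j + 6 - 1) mod 6}"
    "(i + 6 - 1) mod 6 \<in> {(j + 1) mod 6, (j + 6 - 1) mod 6}"
    using assms(3)
    unfolding neighbours_cycle_graph[OF assms(1)] neighbours_cycle_graph[OF assms(2)]
    by blast+
  moreover have "i \<in> {0, 1, 2, 3, 4, 5}" "j \<in> {0, 1, 2, 3, 4, 5}"
    using assms(1,2) by auto
  ultimately show ?thesis by auto
qed

lemma cycle_graph_6_C4_free: "\<not> induced_subgraph_iso (cycle_graph 4) (cycle_graph 6)"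
proof
  assume "induced_subgraph_iso (cycle_graph 4) (cycle_graph 6)"
  then obtain f where inj: "inj_on f {0..<4}" and into: "f ` {0..<4} \<subseteq> {0..<6}"
    and iso: "\<forall>u \<in> {0..<4}. \<forall>v \<in> {0..<4}.
      adj (cycle_graph 4) u v \<longleftrightarrow> adj (cycle_graph 6) (f u) (f v)"
    unfolding induced_subgraph_iso_def verts_cycle_graph by blast
  have "f 1 \<noteq> f 3" "f 0 \<noteq> f 2" using inj by (auto dest: inj_onD)
  have "{k. adj (cycle_graph 6) (f a) k} = {f 1, f 3}" if "a = 0 \<or> a = 2" for a
  proof -
    have "f a < 6" using into that by (auto simp: image_subset_iff)
    have "f 1 \<in> {k. adj (cycle_graph 6) (f a) k}" "f 3 \<in> {k. adj (cycle_graph 6) (f a) k}"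
      using iso[rule_format, of a 1] iso[rule_format, of a 3] that by (auto simp: adj_cycle_graph)
    with neighbours_cycle_graph[OF \<open>f a < 6\<close>] \<open>f 1 \<noteq> f 3\<close> show ?thesis by auto
  qed
  then have "f 0 = f 2"
    using into by (intro cycle_graph_6_neighbours_inj) (auto simp: image_subset_iff)
  with \<open>f 0 \<noteq> f 2\<close> show False by blast
qed

lemma colouring_cycle_graph_mod:
  assumes "k dvd n" "2 \<le> k"
  shows "colouring (cycle_graph n) k (\<lambda>i. i mod k + 1)"
proof -
  have "i mod k \<noteq> j mod k" if "adj (cycle_graph n) i j" for i j
  proof -
    from that consider "j = (i + 1) mod n" | "i = (j + 1) mod n"
      by (auto simp: adj_cycle_graph)
    then show ?thesis
      using Suc_mod_neq_mod[OF assms(2)] mod_mod_cancel[OF assms(1)] by cases metis+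
  qed
  moreover have "i mod k < k" for i using assms(2) by simp
  ultimately show ?thesis
    by (auto simp: colouring_def Suc_le_eq)
qed

lemma frozen_colouring_cycle_graph_mod_3:
  assumes "3 dvd n"
  shows "frozen_colouring (cycle_graph n) 3 (\<lambda>i. i mod 3 + 1)"
proof -
  have "{1..3} \<subseteq> (\<lambda>i. i mod 3 + 1) ` ({i} \<union> {j. adj (cycle_graph n) i j})" if "i < n" for i
  proof -
    obtain q where "n = 3 * q" using assms by blast
    with that have "i + n - 1 = i + 2 + 3 * (q - 1)" by simp
    then have "(i + n - 1) mod 3 = (i + 2) mod 3" by (simp only: mod_mult_self2)
    then have "(\<lambda>j. j mod 3 + 1) ` {i, i + 1, i + 2} \<subseteq>
        (\<lambda>j. j mod 3 + 1) ` ({i} \<union> {(i + 1) mod n, (i + n - 1) mod n})"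
      using mod_mod_cancel[OF assms] by auto
    then show ?thesis
      unfolding mod_3_image_consecutive neighbours_cycle_graph[OF that] .
  qed
  then show ?thesis
    using colouring_cycle_graph_mod[OF assms] by (simp add: frozen_colouring_def verts_cycle_graph)
qed

theorem lemma1:
  fixes p :: nat
  assumes "p \<ge> 1"
  shows "free_of {edgeless_graph 4, cycle_graph 4, claw} (G_p p)
         \<and> colourable (G_p p) (2 * p)
         \<and> (\<exists>c. frozen_colouring (G_p p) (3 * p) c)"
proof (intro conjI)
  have "\<not> induced_subgraph_iso H (G_p p)"
    if "\<not> induced_subgraph_iso H (cycle_graph 6)" "\<And>u v. \<not> true_twins H u v"
    for H :: "nat graph"
    using that induced_subgraph_iso_of_clique_blowup[of H "cycle_graph 6" p]
    unfolding G_p_def by blast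
  then show "free_of {edgeless_graph 4, cycle_graph 4, claw} (G_p p)"
    using even_cycle_graph_edgeless_free[of 6] cycle_graph_6_C4_free cycle_graph_claw_free
      no_true_twins_edgeless_graph no_true_twins_cycle_graph_4 no_true_twins_claw
    by (simp add: free_of_def)
  show "colourable (G_p p) (2 * p)"
    using colouring_clique_blowup[OF colouring_cycle_graph_mod[of 2 6]]
    unfolding colourable_def G_p_def by auto
  show "\<exists>c. frozen_colouring (G_p p) (3 * p) c"
    using frozen_colouring_clique_blowup
      [OF simple_graph_cycle_graph[of 6] frozen_colouring_cycle_graph_mod_3[of 6]]
    unfolding G_p_def by auto
qed

end
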